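(* Assume there exist $\gamma\in\mathcal{KL}$ and $\psi:\mathbb R^d\to\mathbb R_+$ with $\overline\psi:=\sup_{x\in X^{\rm in}}\psi(x)\in(0,+\infty)$ such that $\varphi(T^k(x))\le\gamma(\psi(x),k)$ for all $x\in X^{\rm in}$ and all $k\in\mathbb N$. Then: (1) $\limsup_{n\to\infty}\nu_n\le 0$, and if moreover there exist $k\in\mathbb N$ and $x\in X^{\rm in}$ with $\varphi(T^k(x))>0$, then $G^{>}_\nu\neq\emptyset$; (2) there exists $h\in\mathcal K_\infty$ (extended to a function on $\mathbb R$) such that $\nu_k\le h(e^{-k})$ for all $k\in\mathbb N$, i.e. $(h,e^{-1})\in\Gamma(\nu)$, and if moreover there exist $k\in\mathbb N$, $x\in X^{\rm in}$ with $\varphi(T^k(x))>0$, then $\mathcal S(\nu,h)=\{k:\nu_k>h(0)\}\neq\emptyset$.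
   Context: Standing data: a nonempty set $X^{\rm in}\subseteq\mathbb R^d$, a map $T:\mathbb R^d\to\mathbb R^d$ ($T^k$ its $k$-fold composition, $T^0=\mathrm{Id}$), and $\varphi:\mathbb R^d\to\mathbb R$ with $\varphi(0)=0$; $\nu_k=\sup_{x\in X^{\rm in}}\varphi(T^k(x))$, assumed finite for every $k$. $G^{>}_\nu=\{k:\nu_k>\limsup_n\nu_n\}$. $\mathcal K$: continuous strictly increasing $\alpha:\mathbb R_+\to\mathbb R_+$ with $\alpha(0)=0$; $\mathcal K_\infty$: those in $\mathcal K$ with $\alpha(x)\to+\infty$. $\mathcal L$: continuous strictly decreasing $\sigma:\mathbb R_+\to\mathbb R_+$ with $\sigma(x)\to0$ as $x\to\infty$. $\mathcal{KL}$: $\gamma:\mathbb R_+\times\mathbb R_+\to\mathbb R_+$ with $\gamma(\cdot,t)\in\mathcal K$ for all $t$ and $\gamma(s,\cdot)\in\mathcal L$ for all $s$. $\Gamma(\nu)=\{(h,\beta):h:\mathbb R\to\mathbb R$ strictly increasing and continuous on $[0,1]$, $\beta\in(0,1)$, $\nu_k\le h(\beta^k)\ \forall k\}$. *)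

theory Defs
  imports "HOL-Analysis.Analysis" "HOL-Library.Liminf_Limsup"
begin

definition nu :: "'a set \<Rightarrow> ('a \<Rightarrow> 'a) \<Rightarrow> ('a \<Rightarrow> real) \<Rightarrow> nat \<Rightarrow> real" where
  "nu Xin T phi k = (SUP x\<in>Xin. phi ((T ^^ k) x))"

definition G_gt :: "(nat \<Rightarrow> real) \<Rightarrow> nat set" where
  "G_gt v = {k. ereal (v k) > limsup (\<lambda>n. ereal (v n))}"

definition class_K :: "(real \<Rightarrow> real) \<Rightarrow> bool" where
  "class_K a \<longleftrightarrow> continuous_on {0..} a \<and> strict_mono_on {0..} a \<and> a 0 = 0
     \<and> (\<forall>x\<ge>0. a x \<ge> 0)"

definition class_Kinf :: "(real \<Rightarrow> real) \<Rightarrow> bool" where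
  "class_Kinf a \<longleftrightarrow> class_K a \<and> filterlim a at_top at_top"

definition class_L :: "(real \<Rightarrow> real) \<Rightarrow> bool" where
  "class_L s \<longleftrightarrow> continuous_on {0..} s
     \<and> (\<forall>x y. 0 \<le> x \<longrightarrow> x < y \<longrightarrow> s y < s x)
     \<and> (\<forall>x\<ge>0. s x \<ge> 0) \<and> (s \<longlongrightarrow> 0) at_top"

text \<open>KL: gamma(.,t) in K for all t >= 0, gamma(s,.) in L for all s > 0
  (s = 0 is excluded since gamma(0,.) = 0 cannot be strictly decreasing).\<close>
definition class_KL :: "(real \<Rightarrow> real \<Rightarrow> real) \<Rightarrow> bool" where
  "class_KL g \<longleftrightarrow> (\<forall>t\<ge>0. class_K (\<lambda>s. g s t)) \<and> (\<forall>s>0. class_L (\<lambda>t. g s t))"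

definition Gamma :: "(nat \<Rightarrow> real) \<Rightarrow> ((real \<Rightarrow> real) \<times> real) set" where
  "Gamma v = {(h, b). strict_mono_on {0..1} h \<and> continuous_on {0..1} h
     \<and> 0 < b \<and> b < 1 \<and> (\<forall>k. v k \<le> h (b ^ k))}"

end

theory Submission
  imports Defs
begin

text \<open>Monotonicity of gamma in its first argument bounds every nu k by sigma k, where
  sigma = gamma (sup psi) is a single class-L function; since sigma tends to 0, the limsup of nu
  is at most 0, so any positive nu k lies in G_gt nu. The substitution t = exp (-k) turns sigma
  into t \<mapsto> sigma (-ln t), which is nondecreasing, continuous and tends to 0 as t \<rightarrow> 0+;
  adding t makes it strictly increasing and unbounded, i.e. a class-K-infinity function h with
  nu k \<le> h (exp (-k)).\<close>

lemma class_L_antimono: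
  assumes "class_L \<sigma>" "0 \<le> x" "x \<le> y"
  shows "\<sigma> y \<le> \<sigma> x"
  using assms unfolding class_L_def by (cases "x = y") (auto simp: less_imp_le)

lemma class_L_tendsto_0_sequentially:
  assumes "class_L \<sigma>"
  shows "(\<lambda>k. \<sigma> (real k)) \<longlonglongrightarrow> 0"
  using assms filterlim_compose[OF _ filterlim_real_sequentially]
  unfolding class_L_def by blast

lemma class_KL_mono_first:
  assumes "class_KL \<gamma>" "0 \<le> s" "s \<le> s'" "0 \<le> t"
  shows "\<gamma> s t \<le> \<gamma> s' t"
proof (cases "s = s'")
  case False
  have "strict_mono_on {0..} (\<lambda>s. \<gamma> s t)"
    using assms(1,4) by (simp add: class_KL_def class_K_def)
  then show ?thesis
    using assms(2,3) False by (auto simp: strict_mono_on_def less_imp_le)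
qed simp

lemma phi_le_nu:
  assumes "bdd_above ((\<lambda>x. phi ((T ^^ k) x)) ` Xin)" "x \<in> Xin"
  shows "phi ((T ^^ k) x) \<le> nu Xin T phi k"
  unfolding nu_def using assms by (intro cSUP_upper)

lemma nu_le_KL_bound:
  assumes "Xin \<noteq> {}" "class_KL \<gamma>" "\<And>x. psi x \<ge> 0" "bdd_above (psi ` Xin)"
    and "\<And>x. x \<in> Xin \<Longrightarrow> phi ((T ^^ k) x) \<le> \<gamma> (psi x) (real k)"
  shows "nu Xin T phi k \<le> \<gamma> (SUP x\<in>Xin. psi x) (real k)"
  unfolding nu_def
proof (rule cSUP_least[OF assms(1)])
  fix x assume x: "x \<in> Xin"
  have "psi x \<le> (SUP x\<in>Xin. psi x)"
    using assms(4) x by (intro cSUP_upper)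
  then have "\<gamma> (psi x) (real k) \<le> \<gamma> (SUP x\<in>Xin. psi x) (real k)"
    using class_KL_mono_first[OF assms(2) assms(3)] by simp
  then show "phi ((T ^^ k) x) \<le> \<gamma> (SUP x\<in>Xin. psi x) (real k)"
    using assms(5)[OF x] by simp
qed

lemma limsup_le_0_if_dominated_by_null:
  fixes v u :: "nat \<Rightarrow> real"
  assumes "\<And>n. v n \<le> u n" "u \<longlonglongrightarrow> 0"
  shows "limsup (\<lambda>n. ereal (v n)) \<le> 0"
proof -
  have "limsup (\<lambda>n. ereal (v n)) \<le> limsup (\<lambda>n. ereal (u n))"
    by (intro Limsup_mono) (auto simp: assms(1))
  also have "\<dots> = 0"
    using lim_imp_Limsup[OF trivial_limit_sequentially tendsto_ereal[OF assms(2)]]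
    by (simp add: zero_ereal_def)
  finally show ?thesis .
qed

lemma G_gt_nonempty_if_pos:
  assumes "limsup (\<lambda>n. ereal (v n)) \<le> 0" "v k > 0"
  shows "G_gt v \<noteq> {}"
proof -
  have "limsup (\<lambda>n. ereal (v n)) < ereal (v k)"
    using assms by (meson ereal_less(2) order.strict_trans1 zero_ereal_def)
  then show ?thesis unfolding G_gt_def by blast
qed

text \<open>Clipping at 0 keeps the argument of sigma in [0, \<infinity>), the only range where class_L says anything.\<close>
definition Kinf_of_L :: "(real \<Rightarrow> real) \<Rightarrow> real \<Rightarrow> real" where
  "Kinf_of_L \<sigma> t = (if t \<le> 0 then 0 else \<sigma> (max 0 (- ln t)) + t)"

lemma Kinf_of_L_0 [simp]: "Kinf_of_L \<sigma> 0 = 0"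
  by (simp add: Kinf_of_L_def)

lemma Kinf_of_L_pos: "t > 0 \<Longrightarrow> Kinf_of_L \<sigma> t = \<sigma> (max 0 (- ln t)) + t"
  by (simp add: Kinf_of_L_def)

lemma Kinf_of_L_exp:
  "Kinf_of_L \<sigma> (exp (- real k)) = \<sigma> (real k) + exp (- real k)"
  by (simp add: Kinf_of_L_pos)

lemma Kinf_of_L_ge:
  assumes "class_L \<sigma>" "t \<ge> 0"
  shows "Kinf_of_L \<sigma> t \<ge> t"
  using assms by (cases "t = 0") (auto simp: Kinf_of_L_def class_L_def)

lemma strict_mono_on_Kinf_of_L:
  assumes "class_L \<sigma>"
  shows "strict_mono_on {0..} (Kinf_of_L \<sigma>)"
proof (rule strict_mono_onI)
  fix s t :: real assume s: "s \<in> {0..}" and st: "s < t"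
  show "Kinf_of_L \<sigma> s < Kinf_of_L \<sigma> t"
  proof (cases "s = 0")
    case True
    then show ?thesis
      using st Kinf_of_L_ge[OF assms, of t] by simp
  next
    case False
    with s have "s > 0" by simp
    moreover have "- ln t \<le> - ln s"
      using \<open>s > 0\<close> st by simp
    then have "\<sigma> (max 0 (- ln s)) \<le> \<sigma> (max 0 (- ln t))"
      by (intro class_L_antimono[OF assms]) auto
    ultimately show ?thesis
      using st by (simp add: Kinf_of_L_pos)
  qed
qed

lemma Kinf_of_L_tendsto_0:
  assumes "class_L \<sigma>"
  shows "(Kinf_of_L \<sigma> \<longlongrightarrow> 0) (at_right 0)"
proof -
  have "filterlim (\<lambda>t::real. - ln t) at_top (at_right 0)"
    by (rule filterlim_compose[OF filterlim_uminus_at_top_at_bot ln_at_0])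
  then have "filterlim (\<lambda>t::real. max 0 (- ln t)) at_top (at_right 0)"
    by (rule filterlim_at_top_mono) auto
  moreover have "(\<sigma> \<longlongrightarrow> 0) at_top"
    using assms unfolding class_L_def by blast
  ultimately have "((\<lambda>t. \<sigma> (max 0 (- ln t))) \<longlongrightarrow> 0) (at_right 0)"
    using filterlim_compose by blast
  then have "((\<lambda>t. \<sigma> (max 0 (- ln t)) + t) \<longlongrightarrow> 0 + 0) (at_right 0)"
    by (intro tendsto_add tendsto_ident_at)
  moreover have "\<forall>\<^sub>F t in at_right 0. \<sigma> (max 0 (- ln t)) + t = Kinf_of_L \<sigma> t"
    by (simp add: eventually_at_filter Kinf_of_L_pos)
  ultimately show ?thesis
    using Lim_transform_eventually by fastforce
qed

lemma continuous_on_Kinf_of_L: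
  assumes "class_L \<sigma>"
  shows "continuous_on {0..} (Kinf_of_L \<sigma>)"
  unfolding continuous_on_eq_continuous_within
proof
  fix x :: real assume x: "x \<in> {0..}"
  show "continuous (at x within {0..}) (Kinf_of_L \<sigma>)"
  proof (cases "x = 0")
    case True
    then show ?thesis
      using Kinf_of_L_tendsto_0[OF assms]
      by (simp add: continuous_within at_within_Ici_at_right)
  next
    case False
    with x have x_pos: "x \<in> {0<..}" by simp
    have "continuous_on {0..} \<sigma>"
      using assms unfolding class_L_def by blast
    moreover have "continuous_on {0<..} (\<lambda>t::real. max 0 (- ln t))"
      by (intro continuous_on_max continuous_on_const continuous_on_minus continuous_on_ln) auto
    ultimately have "continuous_on {0<..} (\<lambda>t. \<sigma> (max 0 (- ln t)))"
      by (rule continuous_on_compose2) auto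
    then have "continuous_on {0<..} (\<lambda>t. \<sigma> (max 0 (- ln t)) + t)"
      by (intro continuous_on_add continuous_on_id)
    then have "continuous_on {0<..} (Kinf_of_L \<sigma>)"
      by (rule continuous_on_cong[THEN iffD1, rotated 2]) (auto simp: Kinf_of_L_pos)
    then have "isCont (Kinf_of_L \<sigma>) x"
      using x_pos by (simp add: continuous_on_eq_continuous_at)
    then show ?thesis
      by (rule continuous_at_imp_continuous_at_within)
  qed
qed

lemma class_Kinf_Kinf_of_L:
  assumes "class_L \<sigma>"
  shows "class_Kinf (Kinf_of_L \<sigma>)"
  unfolding class_Kinf_def class_K_def
proof (intro conjI allI impI continuous_on_Kinf_of_L strict_mono_on_Kinf_of_L assms Kinf_of_L_0)
  show "0 \<le> Kinf_of_L \<sigma> x" if "0 \<le> x" for x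
    using Kinf_of_L_ge[OF assms that] that by linarith
  show "filterlim (Kinf_of_L \<sigma>) at_top at_top"
    by (rule filterlim_at_top_mono[OF filterlim_ident])
      (auto simp: eventually_at_top_linorder intro!: exI[of _ 0] Kinf_of_L_ge[OF assms])
qed

lemma Gamma_exp_minus_oneI:
  assumes "class_K h" "\<And>k. v k \<le> h (exp (- real k))"
  shows "(h, exp (-1)) \<in> Gamma v"
proof -
  have "strict_mono_on {0..1} h" "continuous_on {0..1} h"
    using assms(1) unfolding class_K_def
    by (auto simp: strict_mono_on_def intro: continuous_on_subset)
  moreover have "v k \<le> h (exp (-1) ^ k)" for k
    using assms(2)[of k] by (simp add: exp_of_nat_mult[symmetric])
  ultimately show ?thesis unfolding Gamma_def by simp
qed

theorem mainTheorem9: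
  fixes Xin :: "'a::euclidean_space set" and T :: "'a \<Rightarrow> 'a" and phi :: "'a \<Rightarrow> real"
    and gamma :: "real \<Rightarrow> real \<Rightarrow> real" and psi :: "'a \<Rightarrow> real"
  assumes Xin_ne: "Xin \<noteq> {}"
    and phi0: "phi 0 = 0"
    and nu_finite: "\<And>k. bdd_above ((\<lambda>x. phi ((T ^^ k) x)) ` Xin)"
    and gamma_KL: "class_KL gamma"
    and psi_nonneg: "\<And>x. psi x \<ge> 0"
    and psi_bdd: "bdd_above (psi ` Xin)"
    and psi_sup_pos: "(SUP x\<in>Xin. psi x) > 0"
    and bound: "\<And>x k. x \<in> Xin \<Longrightarrow> phi ((T ^^ k) x) \<le> gamma (psi x) (real k)"
  shows "(limsup (\<lambda>n. ereal (nu Xin T phi n)) \<le> 0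
          \<and> ((\<exists>k. \<exists>x\<in>Xin. phi ((T ^^ k) x) > 0) \<longrightarrow> G_gt (nu Xin T phi) \<noteq> {}))
       \<and> (\<exists>h. class_Kinf h \<and> (\<forall>k. nu Xin T phi k \<le> h (exp (- real k)))
          \<and> (h, exp (-1)) \<in> Gamma (nu Xin T phi)
          \<and> ((\<exists>k. \<exists>x\<in>Xin. phi ((T ^^ k) x) > 0) \<longrightarrow> {k. nu Xin T phi k > h 0} \<noteq> {}))"
proof -
  define \<sigma> where "\<sigma> = gamma (SUP x\<in>Xin. psi x)"
  have \<sigma>_L: "class_L \<sigma>"
    using gamma_KL psi_sup_pos by (simp add: class_KL_def \<sigma>_def)
  have nu_le: "nu Xin T phi k \<le> \<sigma> (real k)" for k
    unfolding \<sigma>_def using Xin_ne gamma_KL psi_nonneg psi_bdd bound by (rule nu_le_KL_bound)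
  define h where "h = Kinf_of_L \<sigma>"
  have h_Kinf: "class_Kinf h"
    unfolding h_def using \<sigma>_L by (rule class_Kinf_Kinf_of_L)
  have h_bound: "nu Xin T phi k \<le> h (exp (- real k))" for k
    using nu_le[of k] by (simp add: h_def Kinf_of_L_exp add_increasing2)
  have limsup_le: "limsup (\<lambda>n. ereal (nu Xin T phi n)) \<le> 0"
    using nu_le class_L_tendsto_0_sequentially[OF \<sigma>_L] by (rule limsup_le_0_if_dominated_by_null)
  show ?thesis
  proof (intro conjI impI exI[of _ h] h_Kinf allI h_bound limsup_le Gamma_exp_minus_oneI)
    assume "\<exists>k. \<exists>x\<in>Xin. 0 < phi ((T ^^ k) x)"
    then obtain k x where "x \<in> Xin" "phi ((T ^^ k) x) > 0" by blast
    then have nu_pos: "nu Xin T phi k > 0"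
      using phi_le_nu[OF nu_finite, of x k] by linarith
    then show "G_gt (nu Xin T phi) \<noteq> {}"
      using limsup_le by (intro G_gt_nonempty_if_pos)
    show "{k. nu Xin T phi k > h 0} \<noteq> {}"
      using nu_pos by (auto simp: h_def)
  qed (use h_Kinf in \<open>simp add: class_Kinf_def\<close>)
qed

end
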